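(* Let $m\le n$, $1\le k\le m$, and let $X = X^*$ be a Hermitian operator on $\mathcal{H}_n\otimes\mathcal{H}_m$. Using the notation $\lambda_i^+$, $X^-$, $P_X^-$, $P_X^0$ defined in the context: 1. If $\|P_X^-\|_{S(k)} = 1$, then $X$ is not $k$-block positive. 2. Suppose $\|P_X^0 + P_X^-\|_{S(k)} < 1$ and \[ \lambda_i^+ \ge \frac{\|X^-\|_{S(k)}}{1 - \|P_X^0+P_X^-\|_{S(k)}} \quad \text{for all } i. \] Then $X$ is $k$-block positive. 3. Suppose $\|P_X^-\|_{S(k)} < 1$, all negative eigenvalues of $X$ are equal, $X$ is nonsingular, and \[ \lambda_i^+ < \frac{\|X^-\|_{S(k)}}{1-\|P_X^-\|_{S(k)}} \quad \text{for all } i. \] Then $X$ is not $k$-block positive.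
   Context: $\mathcal{H}_d=\mathbb{C}^d$ and $m\le n$. $SR$ denotes Schmidt rank, i.e. the number of nonzero singular values of the coefficient matrix of a vector in $\mathcal{H}_n\otimes\mathcal{H}_m$. $\|Y\|_{S(k)} := \sup\{|\langle w|Y|v\rangle| : |v\rangle,|w\rangle \text{ unit}, SR(|v\rangle),SR(|w\rangle)\le k\}$. A Hermitian $Y$ is $k$-block positive if $\langle v|Y|v\rangle\ge 0$ for all $|v\rangle$ with $SR(|v\rangle)\le k$. Equivalently, the map associated to $Y$ via the Choi–Jamiołkowski isomorphism is $k$-positive. For Hermitian $X$, fix an orthonormal eigenbasis: - the positive eigenvalues are $\lambda_i^+$ with eigenvectors $|v_i^+\rangle$; - the negative eigenvalues are $\lambda_i^-$ with eigenvectors $|v_i^-\rangle$; - the eigenvectors for eigenvalue $0$ are $|v_i^0\rangle$. Then $X^- := \sum_i \lambda_i^-|v_i^-\rangle\langle v_i^-|$, $P_X^- := \sum_i |v_i^-\rangle\langle v_i^-|$ is the projection onto the negative part, and $P_X^0 := \sum_i|v_i^0\rangle\langle v_i^0|$ is the projection onto the null space. *)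

theory Defs
  imports Jordan_Normal_Form.Schur_Decomposition Jordan_Normal_Form.DL_Rank
begin

text \<open>Vectors of H_n (x) H_m are complex vectors of dimension n*m; the basis vector
  e_i (x) f_j (i<n, j<m) corresponds to index i*m+j.\<close>

definition coeff_mat :: "nat \<Rightarrow> nat \<Rightarrow> complex vec \<Rightarrow> complex mat" where
  "coeff_mat n m v = mat n m (\<lambda>(i,j). v $ (i*m + j))"

definition schmidt_rank :: "nat \<Rightarrow> nat \<Rightarrow> complex vec \<Rightarrow> nat" where
  "schmidt_rank n m v = vec_space.rank n (coeff_mat n m v)"

definition unit_vec_c :: "nat \<Rightarrow> complex vec \<Rightarrow> bool" where
  "unit_vec_c d v \<longleftrightarrow> v \<in> carrier_vec d \<and> v \<bullet>c v = 1"

text \<open>S(k)-norm: sup of |<w|Y|v>| over unit v, w of Schmidt rank at most k.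
  Note <w|Y|v> = (Y v) . conj w.\<close>
definition sk_norm :: "nat \<Rightarrow> nat \<Rightarrow> nat \<Rightarrow> complex mat \<Rightarrow> real" where
  "sk_norm n m k Y = Sup {cmod ((Y *\<^sub>v v) \<bullet>c w) | v w.
      unit_vec_c (n*m) v \<and> unit_vec_c (n*m) w \<and>
      schmidt_rank n m v \<le> k \<and> schmidt_rank n m w \<le> k}"

definition hermitian_mat :: "complex mat \<Rightarrow> bool" where
  "hermitian_mat Y \<longleftrightarrow> square_mat Y \<and> mat_adjoint Y = Y"

definition k_block_positive :: "nat \<Rightarrow> nat \<Rightarrow> nat \<Rightarrow> complex mat \<Rightarrow> bool" where
  "k_block_positive n m k Y \<longleftrightarrow> hermitian_mat Y \<and>
     (\<forall>v. v \<in> carrier_vec (n*m) \<longrightarrow> schmidt_rank n m v \<le> k \<longrightarrow>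
        Im ((Y *\<^sub>v v) \<bullet>c v) = 0 \<and> 0 \<le> Re ((Y *\<^sub>v v) \<bullet>c v))"

definition real_diag :: "nat \<Rightarrow> (nat \<Rightarrow> real) \<Rightarrow> complex mat" where
  "real_diag d f = mat d d (\<lambda>(i,j). if i = j then complex_of_real (f i) else 0)"

definition eigenbasis :: "nat \<Rightarrow> complex mat \<Rightarrow> complex mat \<Rightarrow> (nat \<Rightarrow> real) \<Rightarrow> bool" where
  "eigenbasis d X U lam \<longleftrightarrow> U \<in> carrier_mat d d \<and> mat_adjoint U * U = 1\<^sub>m d \<and>
     X = U * real_diag d lam * mat_adjoint U"

definition spec_fun :: "nat \<Rightarrow> complex mat \<Rightarrow> (nat \<Rightarrow> real) \<Rightarrow> (real \<Rightarrow> real) \<Rightarrow> complex mat" where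
  "spec_fun d U lam f = U * real_diag d (\<lambda>i. f (lam i)) * mat_adjoint U"

definition neg_part :: "nat \<Rightarrow> complex mat \<Rightarrow> (nat \<Rightarrow> real) \<Rightarrow> complex mat" where
  "neg_part d U lam = spec_fun d U lam (\<lambda>t. if t < 0 then t else 0)"

definition neg_proj :: "nat \<Rightarrow> complex mat \<Rightarrow> (nat \<Rightarrow> real) \<Rightarrow> complex mat" where
  "neg_proj d U lam = spec_fun d U lam (\<lambda>t. if t < 0 then 1 else 0)"

definition null_proj :: "nat \<Rightarrow> complex mat \<Rightarrow> (nat \<Rightarrow> real) \<Rightarrow> complex mat" where
  "null_proj d U lam = spec_fun d U lam (\<lambda>t. if t = 0 then 1 else 0)"

end

theory Submission
  imports Defs "HOL-Analysis.Elementary_Metric_Spaces"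
begin

text \<open>Write \<open>X = \<Sum>\<^sub>i \<lambda>\<^sub>i |u\<^sub>i\<rangle>\<langle>u\<^sub>i|\<close> and give every vector \<open>v\<close> the spectral weights
  \<open>w\<^sub>i = |\<langle>u\<^sub>i|v\<rangle>|\<^sup>2\<close>, so that \<open>\<langle>v|f(X)|v\<rangle> = \<Sum>\<^sub>i f(\<lambda>\<^sub>i) w\<^sub>i\<close> for every spectral function \<open>f\<close>.
  For \<open>f \<ge> 0\<close> the S(k)-norm of \<open>f(X)\<close> is attained on the diagonal: by AM-GM,
  \<open>|\<langle>w|f(X)|v\<rangle>| \<le> (\<langle>v|f(X)|v\<rangle> + \<langle>w|f(X)|w\<rangle>)/2\<close>, and unit vectors of Schmidt rank at most
  \<open>k\<close> form a compact set, Schmidt rank being a matrix rank and hence lower semicontinuous.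

  (1) If \<open>\<parallel>P\<^sup>-\<parallel> = 1\<close>, some unit \<open>v\<close> of Schmidt rank at most \<open>k\<close> carries all its weight on
  negative eigenvalues, so \<open>\<langle>v|X|v\<rangle> < 0\<close>.
  (2) For \<open>v\<close> of Schmidt rank at most \<open>k\<close>, the weight on positive eigenvalues is at least
  \<open>(1 - \<parallel>P\<^sup>0 + P\<^sup>-\<parallel>)\<parallel>v\<parallel>\<^sup>2\<close>, so the positive part of \<open>\<langle>v|X|v\<rangle>\<close> is at least
  \<open>\<parallel>X\<^sup>-\<parallel> \<parallel>v\<parallel>\<^sup>2 \<ge> -\<langle>v|X\<^sup>-|v\<rangle>\<close>.
  (3) If \<open>X\<^sup>- = -\<mu> P\<^sup>-\<close> then \<open>\<parallel>X\<^sup>-\<parallel> \<le> \<mu> \<parallel>P\<^sup>-\<parallel>\<close>. Take a unit \<open>v\<close> maximising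
  \<open>q = \<langle>v|P\<^sup>-|v\<rangle> \<ge> \<parallel>P\<^sup>-\<parallel>\<close>; as \<open>X\<close> has no kernel, the weight on positive eigenvalues is
  \<open>1 - q\<close>, so the positive part of \<open>\<langle>v|X|v\<rangle>\<close> is less than
  \<open>\<mu> \<parallel>P\<^sup>-\<parallel> (1 - q) / (1 - \<parallel>P\<^sup>-\<parallel>) \<le> \<mu> q = -\<langle>v|X\<^sup>-|v\<rangle>\<close>.\<close>

section \<open>Adjoints and Gram matrices\<close>

lemma mat_adjoint_carrier: "A \<in> carrier_mat a b \<Longrightarrow> mat_adjoint A \<in> carrier_mat b a"
  unfolding mat_adjoint_def by auto

lemma mat_adjoint_index:
  "A \<in> carrier_mat a b \<Longrightarrow> i < b \<Longrightarrow> j < a \<Longrightarrow> mat_adjoint A $$ (i,j) = cnj (A $$ (j,i))"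
  unfolding mat_adjoint_def by (auto simp: mat_of_rows_def)

lemma mat_adjoint_smult:
  "A \<in> carrier_mat a b \<Longrightarrow> mat_adjoint (c \<cdot>\<^sub>m A) = cnj c \<cdot>\<^sub>m mat_adjoint A"
proof -
  assume A: "A \<in> carrier_mat a b"
  hence cA: "c \<cdot>\<^sub>m A \<in> carrier_mat a b" by simp
  show ?thesis
    by (rule eq_matI) (use mat_adjoint_carrier[OF A] mat_adjoint_carrier[OF cA] A in
        \<open>auto simp: mat_adjoint_index[OF A] mat_adjoint_index[OF cA]\<close>)
qed

lemma cscalar_prod_sum: "w \<in> carrier_vec N \<Longrightarrow> v \<bullet>c w = (\<Sum>i<N. v $ i * cnj (w $ i))"
  by (auto simp: scalar_prod_def lessThan_atLeast0)

lemma cscalar_prod_self: "v \<in> carrier_vec N \<Longrightarrow> v \<bullet>c v = of_real (\<Sum>i<N. (cmod (v $ i))\<^sup>2)"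
  unfolding of_real_sum complex_norm_square by (simp add: cscalar_prod_sum)

lemma cscalar_prod_mat_adjoint:
  fixes A :: "complex mat"
  assumes A: "A \<in> carrier_mat a b" and x: "x \<in> carrier_vec b" and w: "w \<in> carrier_vec a"
  shows "(A *\<^sub>v x) \<bullet>c w = x \<bullet>c (mat_adjoint A *\<^sub>v w)"
proof -
  have "(A *\<^sub>v x) \<bullet>c w = (\<Sum>i<a. (\<Sum>j<b. A $$ (i,j) * x $ j) * cnj (w $ i))"
    using A x w by (auto simp: cscalar_prod_sum scalar_prod_def lessThan_atLeast0 intro!: sum.cong)
  also have "\<dots> = (\<Sum>j<b. x $ j * (\<Sum>i<a. A $$ (i,j) * cnj (w $ i)))"
    unfolding sum_distrib_left sum_distrib_right by (subst sum.swap) (simp add: mult_ac)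
  also have "\<dots> = x \<bullet>c (mat_adjoint A *\<^sub>v w)"
    using A x w mat_adjoint_carrier[OF A]
    by (subst cscalar_prod_sum[of _ b])
      (auto simp: scalar_prod_def lessThan_atLeast0 mat_adjoint_index sum_distrib_left intro!: sum.cong)
  finally show ?thesis .
qed

definition select_cols :: "'a mat \<Rightarrow> nat \<Rightarrow> nat \<Rightarrow> (nat \<Rightarrow> nat) \<Rightarrow> 'a mat" where
  "select_cols A n r j = mat n r (\<lambda>(i,a). A $$ (i, j a))"

lemma select_cols_carrier: "select_cols A n r j \<in> carrier_mat n r"
  by (simp add: select_cols_def)

definition gram_mat :: "complex mat \<Rightarrow> complex mat" where
  "gram_mat B = mat_adjoint B * B"

lemma gram_mat_carrier: "B \<in> carrier_mat n r \<Longrightarrow> gram_mat B \<in> carrier_mat r r"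
  unfolding gram_mat_def by (rule mult_carrier_mat[OF mat_adjoint_carrier])

lemma gram_mat_det_nonzero_iff:
  fixes B :: "complex mat"
  assumes B: "B \<in> carrier_mat n r"
  shows "det (gram_mat B) \<noteq> 0 \<longleftrightarrow> (\<forall>v\<in>carrier_vec r. B *\<^sub>v v = 0\<^sub>v n \<longrightarrow> v = 0\<^sub>v r)"
proof -
  have "gram_mat B *\<^sub>v v = 0\<^sub>v r \<longleftrightarrow> B *\<^sub>v v = 0\<^sub>v n" if v: "v \<in> carrier_vec r" for v
  proof
    assume "gram_mat B *\<^sub>v v = 0\<^sub>v r"
    hence "mat_adjoint B *\<^sub>v (B *\<^sub>v v) = 0\<^sub>v r"
      using mat_adjoint_carrier[OF B] B v by (simp add: gram_mat_def assoc_mult_mat_vec)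
    hence "(B *\<^sub>v v) \<bullet>c (B *\<^sub>v v) = 0"
      using cscalar_prod_mat_adjoint[OF B v, of "B *\<^sub>v v"] B v by simp
    thus "B *\<^sub>v v = 0\<^sub>v n"
      using conjugate_square_eq_0_vec[OF mult_mat_vec_carrier[OF B v]] by simp
  next
    assume "B *\<^sub>v v = 0\<^sub>v n"
    thus "gram_mat B *\<^sub>v v = 0\<^sub>v r"
      using mat_adjoint_carrier[OF B] B v
      by (simp add: gram_mat_def assoc_mult_mat_vec) (intro eq_vecI, auto)
  qed
  thus ?thesis
    using det_0_iff_vec_prod_zero_field[OF gram_mat_carrier[OF B]] by auto
qed

lemma gram_mat_select_cols_index:
  assumes "a < r" "b < r"
  shows "gram_mat (select_cols A n r j) $$ (a,b) = (\<Sum>i<n. cnj (A $$ (i, j a)) * A $$ (i, j b))"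
proof -
  have S: "select_cols A n r j \<in> carrier_mat n r" by (rule select_cols_carrier)
  have "mat_adjoint (select_cols A n r j) $$ (a,i) = cnj (A $$ (i, j a))" if "i < n" for i
    using mat_adjoint_index[OF S assms(1) that] that assms(1) by (simp add: select_cols_def)
  thus ?thesis
    using assms mat_adjoint_carrier[OF S] S
    by (auto simp: gram_mat_def scalar_prod_def lessThan_atLeast0 intro!: sum.cong)
      (simp add: select_cols_def)
qed

section \<open>Rank and Schmidt rank\<close>

lemma (in vec_space) rank_ge_imp_injective_col_submatrix:
  assumes A: "A \<in> carrier_mat n nc" and r: "r \<le> rank A"
  shows "\<exists>B. B \<in> carrier_mat n r \<and> set (cols B) \<subseteq> set (cols A) \<and>
              (\<forall>v\<in>carrier_vec r. B *\<^sub>v v = 0\<^sub>v n \<longrightarrow> v = 0\<^sub>v r)"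
proof -
  obtain S where S: "maximal S (\<lambda>T. T \<subseteq> set (cols A) \<and> lin_indpt T)"
    using maximal_exists[of "\<lambda>T. T \<subseteq> set (cols A) \<and> lin_indpt T" "card (set (cols A))" "{}"]
    by (meson List.finite_set card_mono empty_iff empty_subsetI finite_lin_indpt2 rev_finite_subset)
  have SA: "S \<subseteq> set (cols A)" and S_indpt: "lin_indpt S" using S by (auto simp: maximal_def)
  obtain T where T: "T \<subseteq> S" "card T = r" "finite T"
    using obtain_subset_with_card_n[of r S] r rank_card_indpt[OF A S] by auto
  obtain ts where ts: "set ts = T" "distinct ts" using finite_distinct_list[OF T(3)] by auto
  have ts_len: "length ts = r" using ts T(2) distinct_card by fastforce
  have ts_carrier: "set ts \<subseteq> carrier_vec n"
    using ts T(1) SA cols_dim[of A] A by auto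
  define B where "B = mat_of_cols n ts"
  have B: "B \<in> carrier_mat n r" using mat_of_cols_carrier(1)[of n ts] ts_len by (simp add: B_def)
  have cols_B: "cols B = ts" unfolding B_def using ts_carrier by (simp add: cols_mat_of_cols)
  have "v = 0\<^sub>v r" if v: "v \<in> carrier_vec r" and Bv: "B *\<^sub>v v = 0\<^sub>v n" for v
  proof (rule ccontr)
    assume "v \<noteq> 0\<^sub>v r"
    from lin_depI[OF B v this Bv] cols_B ts have "lin_dep T" by simp
    with subset_li_is_li[OF S_indpt T(1)] show False by simp
  qed
  with B cols_B ts T(1) SA show ?thesis by blast
qed

lemma (in vec_space) injective_col_submatrix_imp_rank_ge:
  assumes A: "A \<in> carrier_mat n nc" and B: "B \<in> carrier_mat n r"
    and sub: "set (cols B) \<subseteq> set (cols A)"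
    and inj: "\<forall>v\<in>carrier_vec r. B *\<^sub>v v = 0\<^sub>v n \<longrightarrow> v = 0\<^sub>v r"
  shows "r \<le> rank A"
proof -
  have dist: "distinct (cols B)"
  proof (rule ccontr)
    assume "\<not> distinct (cols B)"
    then obtain a b where ab: "a \<noteq> b" "a < r" "b < r" "col B a = col B b"
      using B by (auto simp: distinct_conv_nth)
    define v :: "'a vec" where "v = unit_vec r a - unit_vec r b"
    have v: "v \<in> carrier_vec r" and "v \<noteq> 0\<^sub>v r"
      using ab by (auto simp: v_def dest!: arg_cong[of _ _ "\<lambda>w. w $ a"])
    moreover have "B *\<^sub>v v = 0\<^sub>v n"
    proof -
      have "B *\<^sub>v unit_vec r c = col B c" if "c < r" for c
        using B that by (intro eq_vecI) auto
      thus ?thesis unfolding v_def using B ab by (simp add: mult_minus_distrib_mat_vec)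
    qed
    ultimately show False using inj by blast
  qed
  have "lin_indpt (set (cols B))"
  proof
    assume "lin_dep (set (cols B))"
    from lin_depE[OF B this dist] inj show False by blast
  qed
  with rank_ge_card_indpt[OF A sub] dist B show ?thesis by (simp add: distinct_card)
qed

text \<open>The right-hand side is an open condition on the entries of \<open>A\<close>: this is what makes
  Schmidt rank lower semicontinuous.\<close>

lemma rank_ge_iff_gram_det:
  fixes A :: "complex mat"
  assumes A: "A \<in> carrier_mat n m"
  shows "r \<le> vec_space.rank n A \<longleftrightarrow>
    (\<exists>j. (\<forall>a<r. j a < m) \<and> det (gram_mat (select_cols A n r j)) \<noteq> 0)"
proof
  assume "r \<le> vec_space.rank n A"
  then obtain B where B: "B \<in> carrier_mat n r" "set (cols B) \<subseteq> set (cols A)"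
    "\<forall>v\<in>carrier_vec r. B *\<^sub>v v = 0\<^sub>v n \<longrightarrow> v = 0\<^sub>v r"
    using vec_space.rank_ge_imp_injective_col_submatrix[OF A] by blast
  have "\<exists>c<m. col B a = col A c" if "a < r" for a
  proof -
    have "col B a \<in> col A ` {0..<m}" using B(1,2) A that by (auto simp: cols_def)
    thus ?thesis by auto
  qed
  then obtain j where j: "\<And>a. a < r \<Longrightarrow> j a < m \<and> col B a = col A (j a)" by metis
  have "select_cols A n r j = B"
  proof (rule eq_matI)
    fix i a assume "i < dim_row B" "a < dim_col B"
    with B(1) A j[of a] show "select_cols A n r j $$ (i, a) = B $$ (i, a)"
      by (auto simp: select_cols_def dest!: arg_cong[of _ _ "\<lambda>w. w $ i"])
  qed (use B in \<open>auto simp: select_cols_def\<close>)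
  with j B show "\<exists>j. (\<forall>a<r. j a < m) \<and> det (gram_mat (select_cols A n r j)) \<noteq> 0"
    using gram_mat_det_nonzero_iff[OF B(1)] by blast
next
  assume "\<exists>j. (\<forall>a<r. j a < m) \<and> det (gram_mat (select_cols A n r j)) \<noteq> 0"
  then obtain j where j: "\<forall>a<r. j a < m" and det: "det (gram_mat (select_cols A n r j)) \<noteq> 0"
    by blast
  have "set (cols (select_cols A n r j)) \<subseteq> set (cols A)"
  proof
    fix c assume "c \<in> set (cols (select_cols A n r j))"
    then obtain a where a: "a < r" "c = col (select_cols A n r j) a"
      by (auto simp: cols_def select_cols_def)
    hence "c = col A (j a)" using A j by (intro eq_vecI) (auto simp: select_cols_def)
    thus "c \<in> set (cols A)" using j a A by (auto simp: cols_def)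
  qed
  with det show "r \<le> vec_space.rank n A"
    using vec_space.injective_col_submatrix_imp_rank_ge[OF A select_cols_carrier]
      gram_mat_det_nonzero_iff[OF select_cols_carrier] by blast
qed

lemma rank_smult_le:
  fixes A :: "complex mat"
  assumes A: "A \<in> carrier_mat n m"
  shows "vec_space.rank n (c \<cdot>\<^sub>m A) \<le> vec_space.rank n A"
proof -
  let ?r = "vec_space.rank n (c \<cdot>\<^sub>m A)"
  obtain j where j: "\<forall>a<?r. j a < m" and det: "det (gram_mat (select_cols (c \<cdot>\<^sub>m A) n ?r j)) \<noteq> 0"
    using rank_ge_iff_gram_det[of "c \<cdot>\<^sub>m A" n m ?r] A by auto
  define S where "S = select_cols A n ?r j"
  have S: "S \<in> carrier_mat n ?r" and SH: "mat_adjoint S \<in> carrier_mat ?r n"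
    using mat_adjoint_carrier select_cols_carrier unfolding S_def by blast+
  have "select_cols (c \<cdot>\<^sub>m A) n ?r j = c \<cdot>\<^sub>m S"
    using A j by (intro eq_matI) (auto simp: select_cols_def S_def)
  hence "gram_mat (select_cols (c \<cdot>\<^sub>m A) n ?r j) = (cnj c \<cdot>\<^sub>m mat_adjoint S) * (c \<cdot>\<^sub>m S)"
    by (simp add: gram_mat_def mat_adjoint_smult[OF S])
  also have "\<dots> = (cnj c * c) \<cdot>\<^sub>m gram_mat S"
    unfolding gram_mat_def mult_smult_assoc_mat[OF SH smult_carrier_mat[OF S]] mult_smult_distrib[OF SH S]
    by (rule eq_matI) auto
  finally have "gram_mat (select_cols (c \<cdot>\<^sub>m A) n ?r j) = (cnj c * c) \<cdot>\<^sub>m gram_mat S" .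
  with det have "det (gram_mat S) \<noteq> 0" by auto
  with j A show ?thesis unfolding S_def using rank_ge_iff_gram_det by blast
qed

lemma tendsto_det:
  fixes M :: "nat \<Rightarrow> complex mat"
  assumes M: "\<And>l. M l \<in> carrier_mat r r" and M0: "M0 \<in> carrier_mat r r"
    and lim: "\<And>a b. a < r \<Longrightarrow> b < r \<Longrightarrow> (\<lambda>l. M l $$ (a,b)) \<longlonglongrightarrow> M0 $$ (a,b)"
  shows "(\<lambda>l. det (M l)) \<longlonglongrightarrow> det M0"
proof -
  have "det (M l) = (\<Sum>p | p permutes {0..<r}. signof p * (\<Prod>i=0..<r. M l $$ (i, p i)))" for l
    using M[of l] by (simp add: det_def)
  moreover have "det M0 = (\<Sum>p | p permutes {0..<r}. signof p * (\<Prod>i=0..<r. M0 $$ (i, p i)))"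
    using M0 by (simp add: det_def)
  ultimately show ?thesis
    by (simp only:) (intro tendsto_sum tendsto_mult tendsto_const tendsto_prod lim;
        auto simp: permutes_in_image)
qed

lemma coeff_mat_carrier: "coeff_mat n m v \<in> carrier_mat n m"
  by (simp add: coeff_mat_def)

lemma tensor_index_less: "i < n \<Longrightarrow> j < m \<Longrightarrow> i*m + j < n*(m::nat)"
proof -
  assume "i < n" "j < m"
  hence "i*m + j < (i+1)*m" by simp
  also have "\<dots> \<le> n*m" using \<open>i < n\<close> by (intro mult_right_mono) auto
  finally show ?thesis .
qed

lemma schmidt_rank_le_closed:
  assumes lim: "\<And>t. t < n*m \<Longrightarrow> (\<lambda>l. x l $ t) \<longlonglongrightarrow> v $ t"
    and rank: "\<And>l. schmidt_rank n m (x l) \<le> k"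
  shows "schmidt_rank n m v \<le> k"
proof (rule ccontr)
  let ?G = "\<lambda>w j. gram_mat (select_cols (coeff_mat n m w) n (Suc k) j)"
  assume "\<not> schmidt_rank n m v \<le> k"
  hence "Suc k \<le> vec_space.rank n (coeff_mat n m v)" by (simp add: schmidt_rank_def)
  then obtain j where j: "\<forall>a<Suc k. j a < m" and det: "det (?G v j) \<noteq> 0"
    unfolding rank_ge_iff_gram_det[OF coeff_mat_carrier] by blast
  have "(\<lambda>l. det (?G (x l) j)) \<longlonglongrightarrow> det (?G v j)"
  proof (rule tendsto_det)
    fix a b assume ab: "a < Suc k" "b < Suc k"
    have entry: "?G w j $$ (a,b) = (\<Sum>i<n. cnj (w $ (i*m + j a)) * w $ (i*m + j b))" for w
      using ab j by (simp add: gram_mat_select_cols_index coeff_mat_def)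
    show "(\<lambda>l. ?G (x l) j $$ (a,b)) \<longlonglongrightarrow> ?G v j $$ (a,b)"
      unfolding entry
    proof (intro tendsto_sum tendsto_mult tendsto_cnj)
      fix i assume "i \<in> {..<n}"
      thus "(\<lambda>l. x l $ (i*m + j a)) \<longlonglongrightarrow> v $ (i*m + j a)"
        "(\<lambda>l. x l $ (i*m + j b)) \<longlonglongrightarrow> v $ (i*m + j b)"
        using lim tensor_index_less j ab by auto
    qed
  qed (rule gram_mat_carrier[OF select_cols_carrier])+
  from tendsto_imp_eventually_ne[OF this det]
  obtain l where "det (?G (x l) j) \<noteq> 0" by (auto simp: eventually_sequentially)
  with j have "Suc k \<le> vec_space.rank n (coeff_mat n m (x l))"
    unfolding rank_ge_iff_gram_det[OF coeff_mat_carrier] by blast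
  with rank[of l] show False by (simp add: schmidt_rank_def)
qed

lemma schmidt_rank_smult_le:
  "v \<in> carrier_vec (n*m) \<Longrightarrow> schmidt_rank n m (c \<cdot>\<^sub>v v) \<le> schmidt_rank n m v"
proof -
  assume v: "v \<in> carrier_vec (n*m)"
  have "coeff_mat n m (c \<cdot>\<^sub>v v) = c \<cdot>\<^sub>m coeff_mat n m v"
    using v by (intro eq_matI) (auto simp: coeff_mat_def tensor_index_less)
  thus ?thesis using rank_smult_le[OF coeff_mat_carrier] by (simp add: schmidt_rank_def)
qed

section \<open>The S(k)-norm\<close>

lemma cscalar_prod_smult_both:
  assumes "x \<in> carrier_vec N" "y \<in> carrier_vec N"
  shows "(c \<cdot>\<^sub>v x) \<bullet>c (c \<cdot>\<^sub>v y) = of_real ((cmod c)\<^sup>2) * (x \<bullet>c y)"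
proof -
  have "cnj c * c = of_real ((cmod c)\<^sup>2)" using complex_norm_square[of c] by (simp add: mult.commute)
  thus ?thesis using assms by (simp add: conjugate_smult_vec mult.assoc)
qed

lemma unit_vec_c_sum_norms: "unit_vec_c N v \<Longrightarrow> (\<Sum>i<N. (cmod (v $ i))\<^sup>2) = 1"
  unfolding unit_vec_c_def using cscalar_prod_self[of v N] of_real_eq_1_iff by metis

lemma unit_vec_c_index_le:
  assumes v: "unit_vec_c N v" and t: "t < N"
  shows "cmod (v $ t) \<le> 1"
proof -
  have "(cmod (v $ t))\<^sup>2 \<le> (\<Sum>i<N. (cmod (v $ i))\<^sup>2)"
    using t by (intro member_le_sum) auto
  also have "\<dots> = 1" using unit_vec_c_sum_norms[OF v] .
  finally show ?thesis by (simp add: power_le_one_iff)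
qed

definition sk_values :: "nat \<Rightarrow> nat \<Rightarrow> nat \<Rightarrow> complex mat \<Rightarrow> real set" where
  "sk_values n m k Y = {cmod ((Y *\<^sub>v v) \<bullet>c w) | v w.
      unit_vec_c (n*m) v \<and> unit_vec_c (n*m) w \<and>
      schmidt_rank n m v \<le> k \<and> schmidt_rank n m w \<le> k}"

lemma sk_norm_eq_Sup: "sk_norm n m k Y = Sup (sk_values n m k Y)"
  by (simp add: sk_norm_def sk_values_def)

lemma bdd_above_sk_values:
  assumes Y: "Y \<in> carrier_mat (n*m) (n*m)"
  shows "bdd_above (sk_values n m k Y)"
proof (rule bdd_aboveI)
  let ?N = "n*m"
  fix x assume "x \<in> sk_values n m k Y"
  then obtain v w where x: "x = cmod ((Y *\<^sub>v v) \<bullet>c w)"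
    and v: "unit_vec_c ?N v" and w: "unit_vec_c ?N w"
    unfolding sk_values_def by blast
  have "(Y *\<^sub>v v) \<bullet>c w = (\<Sum>a<?N. \<Sum>b<?N. Y $$ (a,b) * v $ b * cnj (w $ a))"
    using Y v w by (auto simp: unit_vec_c_def cscalar_prod_sum[of w ?N] scalar_prod_def
        lessThan_atLeast0 sum_distrib_right intro!: sum.cong)
  also have "cmod \<dots> \<le> (\<Sum>a<?N. \<Sum>b<?N. cmod (Y $$ (a,b) * v $ b * cnj (w $ a)))"
    by (intro order.trans[OF norm_sum] sum_mono norm_sum)
  also have "\<dots> \<le> (\<Sum>a<?N. \<Sum>b<?N. cmod (Y $$ (a,b)))"
  proof (intro sum_mono)
    fix a b assume "a \<in> {..<?N}" "b \<in> {..<?N}"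
    hence "cmod (v $ b) * cmod (w $ a) \<le> 1"
      using unit_vec_c_index_le[OF v] unit_vec_c_index_le[OF w] by (auto intro: mult_le_one)
    thus "cmod (Y $$ (a,b) * v $ b * cnj (w $ a)) \<le> cmod (Y $$ (a,b))"
      by (simp add: norm_mult mult.assoc mult_left_le)
  qed
  finally show "x \<le> (\<Sum>a<?N. \<Sum>b<?N. cmod (Y $$ (a,b)))" using x by simp
qed

lemma unit_vec_0_schmidt_rank_le_1:
  assumes "0 < n" "0 < m"
  shows "unit_vec_c (n*m) (unit_vec (n*m) 0)" "schmidt_rank n m (unit_vec (n*m) 0) \<le> 1"
proof -
  show "unit_vec_c (n*m) (unit_vec (n*m) 0)"
    using assms by (simp add: unit_vec_c_def)
  have "coeff_mat n m (unit_vec (n*m) 0) $$ (i, j) = (if i = 0 then 1 else 0) * (if j = 0 then 1 else 0)"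
    if "i < n" "j < m" for i j
    using that tensor_index_less[OF that] by (simp add: coeff_mat_def)
  thus "schmidt_rank n m (unit_vec (n*m) 0) \<le> 1"
    unfolding schmidt_rank_def
    by (intro vec_space.rank_le_1_product_entries[OF coeff_mat_carrier]) (auto simp: coeff_mat_def)
qed

lemma sk_values_nonempty:
  assumes "0 < n" "0 < m" "1 \<le> k"
  shows "sk_values n m k Y \<noteq> {}"
  using unit_vec_0_schmidt_rank_le_1[OF assms(1,2)] assms(3) unfolding sk_values_def by fastforce

lemma sk_norm_upper:
  assumes "Y \<in> carrier_mat (n*m) (n*m)" "unit_vec_c (n*m) v" "unit_vec_c (n*m) w"
    "schmidt_rank n m v \<le> k" "schmidt_rank n m w \<le> k"
  shows "cmod ((Y *\<^sub>v v) \<bullet>c w) \<le> sk_norm n m k Y"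
  unfolding sk_norm_eq_Sup using assms
  by (intro cSup_upper bdd_above_sk_values[OF assms(1)]) (auto simp: sk_values_def)

text \<open>The hypotheses on \<open>n\<close>, \<open>m\<close>, \<open>k\<close> make \<open>sk_values\<close> nonempty; otherwise \<open>sk_norm\<close> is the
  junk value \<open>Sup {}\<close>.\<close>

lemma sk_norm_least:
  assumes "0 < n" "0 < m" "1 \<le> k"
    and "\<And>v w. unit_vec_c (n*m) v \<Longrightarrow> unit_vec_c (n*m) w \<Longrightarrow>
      schmidt_rank n m v \<le> k \<Longrightarrow> schmidt_rank n m w \<le> k \<Longrightarrow> cmod ((Y *\<^sub>v v) \<bullet>c w) \<le> B"
  shows "sk_norm n m k Y \<le> B"
  unfolding sk_norm_eq_Sup using assms
  by (intro cSup_least sk_values_nonempty) (auto simp: sk_values_def)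

lemma sk_norm_nonneg:
  assumes "Y \<in> carrier_mat (n*m) (n*m)" "0 < n" "0 < m" "1 \<le> k"
  shows "0 \<le> sk_norm n m k Y"
  using sk_norm_upper[OF assms(1) unit_vec_0_schmidt_rank_le_1(1)[OF assms(2,3)]
      unit_vec_0_schmidt_rank_le_1(1)[OF assms(2,3)]] unit_vec_0_schmidt_rank_le_1(2)[OF assms(2,3)] assms(4)
  by (meson norm_ge_zero order_trans)

lemma sk_norm_approx:
  assumes "Y \<in> carrier_mat (n*m) (n*m)" "0 < n" "0 < m" "1 \<le> k" "0 < e"
  obtains v w where "unit_vec_c (n*m) v" "unit_vec_c (n*m) w"
    "schmidt_rank n m v \<le> k" "schmidt_rank n m w \<le> k"
    "sk_norm n m k Y - e < cmod ((Y *\<^sub>v v) \<bullet>c w)"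
proof -
  have "sk_norm n m k Y - e < Sup (sk_values n m k Y)" using assms(5) by (simp add: sk_norm_eq_Sup)
  then obtain x where "x \<in> sk_values n m k Y" "sk_norm n m k Y - e < x"
    using less_cSup_iff[OF sk_values_nonempty[OF assms(2-4)] bdd_above_sk_values[OF assms(1)]]
    by blast
  with that show ?thesis unfolding sk_values_def by blast
qed

lemma sk_norm_quadratic_form_bound:
  assumes Y: "Y \<in> carrier_mat (n*m) (n*m)" and v: "v \<in> carrier_vec (n*m)"
    and rank: "schmidt_rank n m v \<le> k"
  shows "cmod ((Y *\<^sub>v v) \<bullet>c v) \<le> sk_norm n m k Y * Re (v \<bullet>c v)"
proof (cases "v = 0\<^sub>v (n*m)")
  case True
  thus ?thesis using Y by simp
next
  case False
  define V where "V = Re (v \<bullet>c v)"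
  have vv: "v \<bullet>c v = of_real V"
    using cscalar_prod_self[OF v] by (simp add: V_def)
  have "0 < V"
    using False conjugate_square_greater_0_vec[OF v] vv by (simp add: less_eq_complex_def less_complex_def)
  define c where "c = complex_of_real (1 / sqrt V)"
  have c2: "(cmod c)\<^sup>2 = 1 / V"
    using \<open>0 < V\<close> unfolding c_def norm_of_real power2_abs by (simp add: power_divide)
  define u where "u = c \<cdot>\<^sub>v v"
  have "u \<bullet>c u = 1"
    unfolding u_def cscalar_prod_smult_both[OF v v] c2 vv using \<open>0 < V\<close> by simp
  hence u: "unit_vec_c (n*m) u" using v by (simp add: unit_vec_c_def u_def)
  have u_rank: "schmidt_rank n m u \<le> k"
    using schmidt_rank_smult_le[OF v] rank unfolding u_def by (rule order.trans)
  have "(Y *\<^sub>v u) \<bullet>c u = of_real (1 / V) * ((Y *\<^sub>v v) \<bullet>c v)"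
    using Y v unfolding u_def mult_mat_vec[OF Y v] cscalar_prod_smult_both[OF mult_mat_vec_carrier[OF Y v] v] c2
    by simp
  hence "cmod ((Y *\<^sub>v u) \<bullet>c u) = cmod ((Y *\<^sub>v v) \<bullet>c v) / V"
    using \<open>0 < V\<close> by (simp add: norm_mult norm_divide)
  hence "cmod ((Y *\<^sub>v v) \<bullet>c v) = V * cmod ((Y *\<^sub>v u) \<bullet>c u)"
    using \<open>0 < V\<close> by simp
  also have "\<dots> \<le> V * sk_norm n m k Y"
    using sk_norm_upper[OF Y u u u_rank u_rank] \<open>0 < V\<close> by simp
  finally show ?thesis by (simp add: V_def mult.commute)
qed

lemma tendsto_cscalar_prod_self:
  fixes x :: "nat \<Rightarrow> complex vec"
  assumes lim: "\<And>t. t < N \<Longrightarrow> (\<lambda>l. x l $ t) \<longlonglongrightarrow> v $ t"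
    and x: "\<And>l. x l \<in> carrier_vec N" and v: "v \<in> carrier_vec N"
  shows "(\<lambda>l. x l \<bullet>c x l) \<longlonglongrightarrow> v \<bullet>c v"
proof -
  have "(\<lambda>l. \<Sum>t<N. x l $ t * cnj (x l $ t)) \<longlonglongrightarrow> (\<Sum>t<N. v $ t * cnj (v $ t))"
    by (intro tendsto_sum tendsto_mult tendsto_cnj lim) auto
  thus ?thesis by (simp only: cscalar_prod_sum[OF x] cscalar_prod_sum[OF v])
qed

lemma unit_vec_c_convergent_subseq:
  fixes x :: "nat \<Rightarrow> complex vec"
  assumes x: "\<And>l. unit_vec_c N (x l)"
  obtains r v where "strict_mono r" "unit_vec_c N v" "\<And>t. t < N \<Longrightarrow> (\<lambda>l. x (r l) $ t) \<longlonglongrightarrow> v $ t"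
proof -
  \<comment> \<open>Bolzano-Weierstrass needs a \<open>heine_borel\<close> codomain, so coordinates are split into
    real and imaginary parts.\<close>
  let ?f = "\<lambda>l t. (Re (x l $ t), Im (x l $ t))"
  have "\<forall>\<delta>\<subseteq>{..<N}. \<exists>g r. strict_mono r \<and>
      (\<forall>\<epsilon>>0. \<forall>\<^sub>F l in sequentially. \<forall>i\<in>\<delta>. dist (?f (r l) i) (g i) < \<epsilon>)"
  proof (rule compact_lemma_general[where proj = "\<lambda>g t. g t" and unproj = "\<lambda>g. g"])
    fix t assume "t \<in> {..<N}"
    hence "norm (?f l t) \<le> 1" for l
      using unit_vec_c_index_le[OF x] by (simp add: norm_prod_def cmod_def)
    thus "bounded ((\<lambda>g. g t) ` range ?f)" unfolding bounded_iff by auto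
  qed auto
  hence "\<exists>g r. strict_mono r \<and>
      (\<forall>\<epsilon>>0. \<forall>\<^sub>F l in sequentially. \<forall>i\<in>{..<N}. dist (?f (r l) i) (g i) < \<epsilon>)"
    by blast
  then obtain g r where r: "strict_mono r"
    and conv: "\<forall>\<epsilon>>0. \<forall>\<^sub>F l in sequentially. \<forall>i\<in>{..<N}. dist (?f (r l) i) (g i) < \<epsilon>"
    by blast
  define v where "v = vec N (\<lambda>t. Complex (fst (g t)) (snd (g t)))"
  have lim: "(\<lambda>l. x (r l) $ t) \<longlonglongrightarrow> v $ t" if t: "t < N" for t
  proof -
    have "(\<lambda>l. ?f (r l) t) \<longlonglongrightarrow> g t"
    proof (rule tendstoI)
      fix \<epsilon> :: real assume "0 < \<epsilon>"
      with conv have "\<forall>\<^sub>F l in sequentially. \<forall>i\<in>{..<N}. dist (?f (r l) i) (g i) < \<epsilon>" by blast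
      thus "\<forall>\<^sub>F l in sequentially. dist (?f (r l) t) (g t) < \<epsilon>"
        by eventually_elim (use t in auto)
    qed
    from tendsto_Complex[OF tendsto_fst[OF this] tendsto_snd[OF this]]
    show ?thesis using t by (simp add: v_def)
  qed
  have "(\<lambda>l. x (r l) \<bullet>c x (r l)) \<longlonglongrightarrow> v \<bullet>c v"
    using lim x by (intro tendsto_cscalar_prod_self) (auto simp: unit_vec_c_def v_def)
  moreover have "(\<lambda>l. x (r l) \<bullet>c x (r l)) = (\<lambda>l. 1)" using x by (simp add: unit_vec_c_def)
  ultimately have "v \<bullet>c v = 1" using LIMSEQ_unique tendsto_const by metis
  hence "unit_vec_c N v" by (simp add: unit_vec_c_def v_def)
  with r lim that show ?thesis by blast
qed

section \<open>Spectral functions of a matrix with an orthonormal eigenbasis\<close>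

lemma real_diag_carrier: "real_diag N f \<in> carrier_mat N N"
  by (simp add: real_diag_def)

lemma real_diag_mult_vec_index:
  assumes "i < N" "y \<in> carrier_vec N"
  shows "(real_diag N f *\<^sub>v y) $ i = of_real (f i) * y $ i"
proof -
  have "(real_diag N f *\<^sub>v y) $ i = (\<Sum>j<N. (if i = j then of_real (f i) else 0) * y $ j)"
    using assms by (auto simp: real_diag_def scalar_prod_def lessThan_atLeast0 intro!: sum.cong)
  also have "\<dots> = (\<Sum>j<N. if j = i then of_real (f i) * y $ j else 0)"
    by (rule sum.cong) auto
  finally show ?thesis using assms(1) by simp
qed

locale bipartite_eigenbasis =
  fixes n m k :: nat and U :: "complex mat" and lam :: "nat \<Rightarrow> real"
  assumes dims_pos: "0 < n" "0 < m" and one_le_k: "1 \<le> k"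
    and U_carrier: "U \<in> carrier_mat (n*m) (n*m)"
    and U_unitary: "mat_adjoint U * U = 1\<^sub>m (n*m)"
begin

definition coord :: "complex vec \<Rightarrow> nat \<Rightarrow> complex" where
  "coord v i = (mat_adjoint U *\<^sub>v v) $ i"

definition weight :: "complex vec \<Rightarrow> nat \<Rightarrow> real" where
  "weight v i = (cmod (coord v i))\<^sup>2"

definition spec_form :: "(real \<Rightarrow> real) \<Rightarrow> complex vec \<Rightarrow> real" where
  "spec_form f v = (\<Sum>i<n*m. f (lam i) * weight v i)"

lemma U_adjoint_carrier: "mat_adjoint U \<in> carrier_mat (n*m) (n*m)"
  by (rule mat_adjoint_carrier[OF U_carrier])

lemma spec_fun_carrier: "spec_fun (n*m) U lam f \<in> carrier_mat (n*m) (n*m)"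
  unfolding spec_fun_def using U_carrier U_adjoint_carrier real_diag_carrier by auto

lemma weight_nonneg: "0 \<le> weight v i"
  by (simp add: weight_def)

lemma cscalar_prod_spec_fun:
  assumes v: "v \<in> carrier_vec (n*m)" and w: "w \<in> carrier_vec (n*m)"
  shows "(spec_fun (n*m) U lam f *\<^sub>v v) \<bullet>c w
       = (\<Sum>i<n*m. of_real (f (lam i)) * coord v i * cnj (coord w i))"
proof -
  let ?D = "real_diag (n*m) (\<lambda>i. f (lam i))"
  have Uv: "mat_adjoint U *\<^sub>v v \<in> carrier_vec (n*m)" and Uw: "mat_adjoint U *\<^sub>v w \<in> carrier_vec (n*m)"
    using U_adjoint_carrier v w by auto
  have "spec_fun (n*m) U lam f *\<^sub>v v = U *\<^sub>v (?D *\<^sub>v (mat_adjoint U *\<^sub>v v))"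
    unfolding spec_fun_def using U_carrier U_adjoint_carrier real_diag_carrier v
    by (simp add: assoc_mult_mat_vec[of _ "n*m" "n*m" _ "n*m"])
  hence "(spec_fun (n*m) U lam f *\<^sub>v v) \<bullet>c w = (?D *\<^sub>v (mat_adjoint U *\<^sub>v v)) \<bullet>c (mat_adjoint U *\<^sub>v w)"
    using cscalar_prod_mat_adjoint[OF U_carrier mult_mat_vec_carrier[OF real_diag_carrier Uv] w]
    by simp
  also have "\<dots> = (\<Sum>i<n*m. (?D *\<^sub>v (mat_adjoint U *\<^sub>v v)) $ i * cnj (coord w i))"
    unfolding coord_def by (rule cscalar_prod_sum[OF Uw])
  also have "\<dots> = (\<Sum>i<n*m. of_real (f (lam i)) * coord v i * cnj (coord w i))"
    unfolding coord_def by (intro sum.cong refl) (simp add: real_diag_mult_vec_index[OF _ Uv])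
  finally show ?thesis .
qed

lemma cscalar_prod_spec_fun_self:
  "v \<in> carrier_vec (n*m) \<Longrightarrow> (spec_fun (n*m) U lam f *\<^sub>v v) \<bullet>c v = of_real (spec_form f v)"
  unfolding cscalar_prod_spec_fun spec_form_def weight_def of_real_sum of_real_mult complex_norm_square
  by (simp add: mult.assoc)

lemma spec_form_one:
  assumes v: "v \<in> carrier_vec (n*m)"
  shows "spec_form (\<lambda>_. 1) v = Re (v \<bullet>c v)"
proof -
  have "real_diag (n*m) (\<lambda>_. 1) = 1\<^sub>m (n*m)"
    by (rule eq_matI) (auto simp: real_diag_def)
  hence "spec_fun (n*m) U lam (\<lambda>_. 1) = 1\<^sub>m (n*m)"
    using mat_mult_left_right_inverse[OF U_adjoint_carrier U_carrier U_unitary] U_carrier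
    by (simp add: spec_fun_def)
  thus ?thesis using cscalar_prod_spec_fun_self[OF v, of "\<lambda>_. 1"] v by simp
qed


lemma spec_form_unit: "unit_vec_c (n*m) v \<Longrightarrow> spec_form (\<lambda>_. 1) v = 1"
  using spec_form_one by (simp add: unit_vec_c_def)

lemma spec_form_add: "spec_form (\<lambda>t. f t + g t) v = spec_form f v + spec_form g v"
  by (simp add: spec_form_def distrib_right sum.distrib)

lemma spec_form_scale: "spec_form (\<lambda>t. c * f t) v = c * spec_form f v"
  by (simp add: spec_form_def sum_distrib_left mult.assoc)

lemma spec_form_zero [simp]: "spec_form (\<lambda>_. 0) v = 0"
  by (simp add: spec_form_def)

lemma spec_form_cong:
  "(\<And>i. i < n*m \<Longrightarrow> 0 < weight v i \<Longrightarrow> f (lam i) = g (lam i)) \<Longrightarrow> spec_form f v = spec_form g v"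
  unfolding spec_form_def using weight_nonneg by (intro sum.cong) (auto simp: order_le_less)

lemma spec_form_mono:
  "(\<And>i. i < n*m \<Longrightarrow> f (lam i) \<le> g (lam i)) \<Longrightarrow> spec_form f v \<le> spec_form g v"
  unfolding spec_form_def by (intro sum_mono mult_right_mono weight_nonneg) auto

lemma spec_form_less:
  assumes "\<And>i. i < n*m \<Longrightarrow> f (lam i) \<le> g (lam i)"
    and "i < n*m" "f (lam i) < g (lam i)" "0 < weight v i"
  shows "spec_form f v < spec_form g v"
  unfolding spec_form_def
proof (rule sum_strict_mono_ex1)
  show "\<forall>j\<in>{..<n*m}. f (lam j) * weight v j \<le> g (lam j) * weight v j"
    using assms(1) weight_nonneg by (auto intro: mult_right_mono)
  show "\<exists>j\<in>{..<n*m}. f (lam j) * weight v j < g (lam j) * weight v j"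
    using assms(2-4) by (auto intro: mult_strict_right_mono)
qed simp

lemma spec_form_pos_part_add_neg_part:
  "spec_form (\<lambda>t. t) v = spec_form (\<lambda>t. if 0 < t then t else 0) v + spec_form (\<lambda>t. if t < 0 then t else 0) v"
  by (subst spec_form_add[symmetric]) (rule spec_form_cong, auto)

lemma spec_form_neq_0_imp_ex:
  assumes "spec_form f v \<noteq> 0"
  shows "\<exists>i<n*m. f (lam i) \<noteq> 0 \<and> 0 < weight v i"
proof -
  have "\<exists>i<n*m. f (lam i) * weight v i \<noteq> 0"
    using assms unfolding spec_form_def by (meson lessThan_iff sum.neutral)
  thus ?thesis using weight_nonneg by (fastforce simp: order_less_le)
qed

lemma spec_form_eq_0_imp_weight:
  assumes "\<And>j. j < n*m \<Longrightarrow> 0 \<le> f (lam j)" "spec_form f v = 0" "i < n*m" "f (lam i) \<noteq> 0"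
  shows "weight v i = 0"
proof -
  have "\<forall>j\<in>{..<n*m}. f (lam j) * weight v j = 0"
    using assms(1,2) weight_nonneg unfolding spec_form_def
    by (subst sum_nonneg_eq_0_iff[symmetric]) auto
  with assms(3,4) show ?thesis by fastforce
qed

lemma spec_fun_add:
  "spec_fun (n*m) U lam f + spec_fun (n*m) U lam g = spec_fun (n*m) U lam (\<lambda>t. f t + g t)"
proof -
  have "real_diag (n*m) (\<lambda>i. f (lam i) + g (lam i))
      = real_diag (n*m) (\<lambda>i. f (lam i)) + real_diag (n*m) (\<lambda>i. g (lam i))"
    by (rule eq_matI) (auto simp: real_diag_def)
  moreover have "U * (A + B) * mat_adjoint U = U * A * mat_adjoint U + U * B * mat_adjoint U"
    if "A \<in> carrier_mat (n*m) (n*m)" "B \<in> carrier_mat (n*m) (n*m)" for A B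
    using that U_carrier U_adjoint_carrier
    by (simp add: mult_add_distrib_mat[of U "n*m" "n*m"] add_mult_distrib_mat[of _ "n*m" "n*m"])
  ultimately show ?thesis
    using real_diag_carrier by (simp add: spec_fun_def)
qed

lemma det_spec_fun: "det (spec_fun (n*m) U lam f) = (\<Prod>i<n*m. of_real (f (lam i)))"
proof -
  let ?D = "real_diag (n*m) (\<lambda>i. f (lam i))"
  have "det ?D = (\<Prod>i<n*m. of_real (f (lam i)))"
    using det_upper_triangular[OF _ real_diag_carrier]
    by (auto simp: upper_triangular_def real_diag_def prod_list_diag_prod lessThan_atLeast0)
  moreover have "det (mat_adjoint U) * det U = 1"
    using det_mult[OF U_adjoint_carrier U_carrier] U_unitary by simp
  ultimately show ?thesis
    using U_carrier U_adjoint_carrier real_diag_carrier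
    by (simp add: spec_fun_def det_mult[of _ "n*m"] mult_ac)
qed


lemma tendsto_spec_form:
  fixes x :: "nat \<Rightarrow> complex vec"
  assumes x: "\<And>l. x l \<in> carrier_vec (n*m)" and v: "v \<in> carrier_vec (n*m)"
    and lim: "\<And>t. t < n*m \<Longrightarrow> (\<lambda>l. x l $ t) \<longlonglongrightarrow> v $ t"
  shows "(\<lambda>l. spec_form f (x l)) \<longlonglongrightarrow> spec_form f v"
proof -
  have coord: "coord w i = (\<Sum>t<n*m. mat_adjoint U $$ (i,t) * w $ t)"
    if "w \<in> carrier_vec (n*m)" "i < n*m" for w i
    using that U_adjoint_carrier by (simp add: coord_def scalar_prod_def lessThan_atLeast0)
  have "(\<lambda>l. coord (x l) i) \<longlonglongrightarrow> coord v i" if "i < n*m" for i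
    unfolding coord[OF x that] coord[OF v that] by (intro tendsto_intros lim) auto
  thus ?thesis
    unfolding spec_form_def weight_def by (intro tendsto_intros) auto
qed

lemma cmod_cscalar_prod_spec_fun_le_mean:
  assumes f: "\<And>i. i < n*m \<Longrightarrow> 0 \<le> f (lam i)"
    and v: "v \<in> carrier_vec (n*m)" and w: "w \<in> carrier_vec (n*m)"
  shows "cmod ((spec_fun (n*m) U lam f *\<^sub>v v) \<bullet>c w) \<le> (spec_form f v + spec_form f w) / 2"
proof -
  have "cmod ((spec_fun (n*m) U lam f *\<^sub>v v) \<bullet>c w)
      \<le> (\<Sum>i<n*m. cmod (of_real (f (lam i)) * coord v i * cnj (coord w i)))"
    unfolding cscalar_prod_spec_fun[OF v w] by (rule norm_sum)
  also have "\<dots> \<le> (\<Sum>i<n*m. f (lam i) * weight v i / 2 + f (lam i) * weight w i / 2)"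
  proof (rule sum_mono)
    fix i assume "i \<in> {..<n*m}"
    have "cmod (coord v i) * cmod (coord w i) \<le> (weight v i + weight w i) / 2"
      using sum_squares_bound[of "cmod (coord v i)" "cmod (coord w i)"]
      by (simp add: weight_def power2_eq_square)
    with f \<open>i \<in> {..<n*m}\<close>
    show "cmod (of_real (f (lam i)) * coord v i * cnj (coord w i))
        \<le> f (lam i) * weight v i / 2 + f (lam i) * weight w i / 2"
      by (auto simp: norm_mult mult.assoc add_divide_distrib[symmetric] distrib_left[symmetric]
          intro: mult_left_mono)
  qed
  also have "\<dots> = (spec_form f v + spec_form f w) / 2"
    by (simp add: spec_form_def sum.distrib sum_divide_distrib add_divide_distrib)
  finally show ?thesis .
qed

lemma sk_norm_spec_fun_approx_by_form:
  assumes f: "\<And>i. i < n*m \<Longrightarrow> 0 \<le> f (lam i)" and "0 < e"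
  shows "\<exists>v. unit_vec_c (n*m) v \<and> schmidt_rank n m v \<le> k \<and>
    sk_norm n m k (spec_fun (n*m) U lam f) - e < spec_form f v"
proof -
  let ?s = "sk_norm n m k (spec_fun (n*m) U lam f)"
  obtain v w where vw: "unit_vec_c (n*m) v" "unit_vec_c (n*m) w"
    "schmidt_rank n m v \<le> k" "schmidt_rank n m w \<le> k"
    "?s - e < cmod ((spec_fun (n*m) U lam f *\<^sub>v v) \<bullet>c w)"
    using sk_norm_approx[OF spec_fun_carrier dims_pos one_le_k \<open>0 < e\<close>] by blast
  moreover have "cmod ((spec_fun (n*m) U lam f *\<^sub>v v) \<bullet>c w) \<le> (spec_form f v + spec_form f w) / 2"
    using cmod_cscalar_prod_spec_fun_le_mean[of f, OF f] vw(1,2) unfolding unit_vec_c_def by blast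
  ultimately have "?s - e < spec_form f v \<or> ?s - e < spec_form f w" by argo
  thus ?thesis using vw by blast
qed

lemma sk_norm_spec_fun_attained:
  assumes f: "\<And>i. i < n*m \<Longrightarrow> 0 \<le> f (lam i)"
  obtains v where "unit_vec_c (n*m) v" "schmidt_rank n m v \<le> k"
    "sk_norm n m k (spec_fun (n*m) U lam f) \<le> spec_form f v"
proof -
  let ?s = "sk_norm n m k (spec_fun (n*m) U lam f)"
  have "\<forall>l. \<exists>v. unit_vec_c (n*m) v \<and> schmidt_rank n m v \<le> k \<and>
      ?s - inverse (real (Suc l)) < spec_form f v"
    using sk_norm_spec_fun_approx_by_form[of f, OF f] by simp
  then obtain x where x: "\<And>l. unit_vec_c (n*m) (x l)" "\<And>l. schmidt_rank n m (x l) \<le> k"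
    and x_approx: "\<And>l. ?s - inverse (real (Suc l)) < spec_form f (x l)"
    by metis
  obtain r v where r: "strict_mono r" and v: "unit_vec_c (n*m) v"
    and lim: "\<And>t. t < n*m \<Longrightarrow> (\<lambda>l. x (r l) $ t) \<longlonglongrightarrow> v $ t"
    using unit_vec_c_convergent_subseq[of "n*m" x] x(1) by blast
  have x_carrier: "\<And>l. x l \<in> carrier_vec (n*m)" and v_carrier: "v \<in> carrier_vec (n*m)"
    using x(1) v unfolding unit_vec_c_def by blast+
  have "(\<lambda>l. spec_form f (x (r l)) + inverse (real (Suc l))) \<longlonglongrightarrow> spec_form f v + 0"
    by (rule tendsto_add[OF tendsto_spec_form[OF x_carrier v_carrier lim] LIMSEQ_inverse_real_of_nat])
  moreover have "\<forall>l. ?s \<le> spec_form f (x (r l)) + inverse (real (Suc l))"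
  proof
    fix l
    have "inverse (real (Suc (r l))) \<le> inverse (real (Suc l))"
      using seq_suble[OF r, of l] by (simp add: le_imp_inverse_le)
    thus "?s \<le> spec_form f (x (r l)) + inverse (real (Suc l))" using x_approx[of "r l"] by linarith
  qed
  ultimately have "?s \<le> spec_form f v + 0"
    using tendsto_lowerbound[OF _ always_eventually trivial_limit_sequentially] by blast
  with that v schmidt_rank_le_closed[OF lim x(2)] show ?thesis by simp
qed

lemma sk_norm_spec_fun_scale_le:
  assumes fg: "\<And>i. i < n*m \<Longrightarrow> f (lam i) = c * g (lam i)"
  shows "sk_norm n m k (spec_fun (n*m) U lam f) \<le> \<bar>c\<bar> * sk_norm n m k (spec_fun (n*m) U lam g)"
proof (rule sk_norm_least[OF dims_pos one_le_k])
  fix v w assume vw: "unit_vec_c (n*m) v" "unit_vec_c (n*m) w"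
    "schmidt_rank n m v \<le> k" "schmidt_rank n m w \<le> k"
  hence v: "v \<in> carrier_vec (n*m)" and w: "w \<in> carrier_vec (n*m)" by (auto simp: unit_vec_c_def)
  have "(spec_fun (n*m) U lam f *\<^sub>v v) \<bullet>c w = of_real c * ((spec_fun (n*m) U lam g *\<^sub>v v) \<bullet>c w)"
    unfolding cscalar_prod_spec_fun[OF v w] sum_distrib_left using fg by (intro sum.cong) auto
  hence "cmod ((spec_fun (n*m) U lam f *\<^sub>v v) \<bullet>c w) = \<bar>c\<bar> * cmod ((spec_fun (n*m) U lam g *\<^sub>v v) \<bullet>c w)"
    by (simp add: norm_mult)
  also have "\<dots> \<le> \<bar>c\<bar> * sk_norm n m k (spec_fun (n*m) U lam g)"
    using sk_norm_upper[OF spec_fun_carrier vw] by (rule mult_left_mono) simp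
  finally show "cmod ((spec_fun (n*m) U lam f *\<^sub>v v) \<bullet>c w) \<le> \<bar>c\<bar> * sk_norm n m k (spec_fun (n*m) U lam g)" .
qed

lemma k_block_positive_spec_fun_iff:
  "k_block_positive n m k (spec_fun (n*m) U lam (\<lambda>t. t)) \<longleftrightarrow>
    hermitian_mat (spec_fun (n*m) U lam (\<lambda>t. t)) \<and>
    (\<forall>v\<in>carrier_vec (n*m). schmidt_rank n m v \<le> k \<longrightarrow> 0 \<le> spec_form (\<lambda>t. t) v)"
  by (auto simp: k_block_positive_def cscalar_prod_spec_fun_self)


section \<open>The three criteria\<close>

lemma not_k_block_positive_if_sk_norm_neg_proj_eq_1:
  assumes one: "sk_norm n m k (neg_proj (n*m) U lam) = 1"
  shows "\<not> k_block_positive n m k (spec_fun (n*m) U lam (\<lambda>t. t))"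
proof
  assume kbp: "k_block_positive n m k (spec_fun (n*m) U lam (\<lambda>t. t))"
  let ?neg = "\<lambda>t::real. if t < 0 then 1 else 0" and ?nonneg = "\<lambda>t::real. if t < 0 then 0 else 1"
  obtain v where v: "unit_vec_c (n*m) v" "schmidt_rank n m v \<le> k"
    and "sk_norm n m k (neg_proj (n*m) U lam) \<le> spec_form ?neg v"
    unfolding neg_proj_def by (rule sk_norm_spec_fun_attained[of ?neg]) simp_all
  hence "1 \<le> spec_form ?neg v" using one by simp
  moreover have "spec_form ?neg v + spec_form ?nonneg v = 1"
    using spec_form_add[of ?neg ?nonneg v, symmetric] spec_form_unit[OF v(1)]
    by (simp add: if_distrib cong: if_cong)
  moreover have "0 \<le> spec_form ?nonneg v"
    using spec_form_mono[of "\<lambda>_. 0" ?nonneg v] by simp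
  ultimately have "spec_form ?nonneg v = 0" "spec_form ?neg v \<noteq> 0" by auto
  have no_weight: "weight v i = 0" if "i < n*m" "0 \<le> lam i" for i
    using spec_form_eq_0_imp_weight[of ?nonneg v i] \<open>spec_form ?nonneg v = 0\<close> that by simp
  have "spec_form (\<lambda>t. t) v = spec_form (\<lambda>t. if t < 0 then t else 0) v"
  proof (rule spec_form_cong)
    fix i assume "i < n*m" "0 < weight v i"
    thus "lam i = (if lam i < 0 then lam i else 0)" using no_weight[of i] by (cases "0 \<le> lam i") auto
  qed
  also have "\<dots> < spec_form (\<lambda>_. 0) v"
  proof -
    obtain i where i: "i < n*m" "lam i < 0" "0 < weight v i"
      using spec_form_neq_0_imp_ex[OF \<open>spec_form ?neg v \<noteq> 0\<close>] by (auto split: if_splits)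
    show ?thesis by (rule spec_form_less[OF _ i(1) _ i(3)]) (use i(2) in auto)
  qed
  finally show False
    using kbp v(2) v(1) by (auto simp: k_block_positive_spec_fun_iff unit_vec_c_def)
qed

lemma k_block_positive_if_pos_eigenvalues_large:
  assumes herm: "hermitian_mat (spec_fun (n*m) U lam (\<lambda>t. t))"
    and q_less: "sk_norm n m k (null_proj (n*m) U lam + neg_proj (n*m) U lam) < 1"
    and large: "\<forall>i < n*m. lam i > 0 \<longrightarrow>
      lam i \<ge> sk_norm n m k (neg_part (n*m) U lam) /
        (1 - sk_norm n m k (null_proj (n*m) U lam + neg_proj (n*m) U lam))"
  shows "k_block_positive n m k (spec_fun (n*m) U lam (\<lambda>t. t))"
proof -
  let ?pos = "\<lambda>t::real. if 0 < t then 1 else 0" and ?nonpos = "\<lambda>t::real. if 0 < t then 0 else 1"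
  define q where "q = sk_norm n m k (null_proj (n*m) U lam + neg_proj (n*m) U lam)"
  define s where "s = sk_norm n m k (neg_part (n*m) U lam)"
  define T where "T = s / (1 - q)"
  have "0 \<le> s" unfolding s_def neg_part_def by (rule sk_norm_nonneg[OF spec_fun_carrier dims_pos one_le_k])
  hence "0 \<le> T" and Ts: "T * (1 - q) = s" using q_less by (simp_all add: T_def q_def)
  have nonpos_proj: "null_proj (n*m) U lam + neg_proj (n*m) U lam = spec_fun (n*m) U lam ?nonpos"
    unfolding null_proj_def neg_proj_def spec_fun_add by (rule arg_cong[where f = "spec_fun _ _ _"]) auto
  have "0 \<le> spec_form (\<lambda>t. t) v" if v: "v \<in> carrier_vec (n*m)" and rank: "schmidt_rank n m v \<le> k" for v
  proof -
    define V where "V = spec_form (\<lambda>_. 1) v"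
    have V: "Re (v \<bullet>c v) = V" using spec_form_one[OF v] by (simp add: V_def)
    have "\<bar>spec_form (\<lambda>t. if t < 0 then t else 0) v\<bar> \<le> s * V"
      using sk_norm_quadratic_form_bound[OF spec_fun_carrier v rank] cscalar_prod_spec_fun_self[OF v] V
      unfolding s_def neg_part_def by simp
    hence neg: "- (s * V) \<le> spec_form (\<lambda>t. if t < 0 then t else 0) v" by linarith
    have "\<bar>spec_form ?nonpos v\<bar> \<le> q * V"
      using sk_norm_quadratic_form_bound[OF spec_fun_carrier v rank] cscalar_prod_spec_fun_self[OF v] V
      unfolding q_def nonpos_proj by simp
    moreover have "spec_form ?pos v + spec_form ?nonpos v = V"
      using spec_form_add[of ?pos ?nonpos v, symmetric] by (simp add: V_def if_distrib cong: if_cong)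
    ultimately have "(1 - q) * V \<le> spec_form ?pos v" by (simp add: algebra_simps)
    hence "s * V \<le> T * spec_form ?pos v"
      using \<open>0 \<le> T\<close> Ts by (metis mult.assoc mult_left_mono)
    also have "\<dots> = spec_form (\<lambda>t. T * ?pos t) v" by (rule spec_form_scale[symmetric])
    also have "\<dots> \<le> spec_form (\<lambda>t. if 0 < t then t else 0) v"
      using large by (intro spec_form_mono) (auto simp: T_def s_def q_def)
    finally have "s * V \<le> spec_form (\<lambda>t. if 0 < t then t else 0) v" .
    thus ?thesis using neg spec_form_pos_part_add_neg_part[of v] by linarith
  qed
  with herm show ?thesis by (simp add: k_block_positive_spec_fun_iff)
qed

lemma spec_form_pos_eq_1_minus_neg:
  assumes nonzero: "\<And>i. i < n*m \<Longrightarrow> lam i \<noteq> 0" and v: "unit_vec_c (n*m) v"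
  shows "spec_form (\<lambda>t. if 0 < t then 1 else 0) v = 1 - spec_form (\<lambda>t. if t < 0 then 1 else 0) v"
proof -
  have "spec_form (\<lambda>t. if 0 < t then 1 else 0) v + spec_form (\<lambda>t. if t < 0 then 1 else 0) v
      = spec_form (\<lambda>_. 1) v"
    unfolding spec_form_add[symmetric] using nonzero by (intro spec_form_cong) auto
  thus ?thesis using spec_form_unit[OF v] by simp
qed

lemma spec_form_neg_if_pos_eigenvalues_small:
  assumes "0 \<le> \<mu>" and neg_eq: "\<And>i. i < n*m \<Longrightarrow> lam i < 0 \<Longrightarrow> lam i = - \<mu>"
    and nonzero: "\<And>i. i < n*m \<Longrightarrow> lam i \<noteq> 0"
    and v: "unit_vec_c (n*m) v"
    and "p < 1" and p_le: "p \<le> spec_form (\<lambda>t. if t < 0 then 1 else 0) v"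
    and small: "\<And>i. i < n*m \<Longrightarrow> 0 < lam i \<Longrightarrow> lam i < \<mu> * p / (1 - p)"
  shows "spec_form (\<lambda>t. t) v < 0"
proof -
  let ?neg = "\<lambda>t::real. if t < 0 then 1 else 0" and ?pos = "\<lambda>t::real. if 0 < t then 1 else 0"
  define q where "q = spec_form ?neg v"
  define T where "T = \<mu> * p / (1 - p)"
  have pos_q: "spec_form ?pos v = 1 - q"
    unfolding q_def by (rule spec_form_pos_eq_1_minus_neg[OF nonzero v])
  have "0 \<le> spec_form ?pos v" using spec_form_mono[of "\<lambda>_. 0" ?pos v] by simp
  hence "q \<le> 1" using pos_q by simp
  have pos_le: "(if 0 < lam i then lam i else 0) \<le> T * ?pos (lam i)" if "i < n*m" for i
    using small[OF that] by (auto simp: T_def)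
  have "spec_form (\<lambda>t. if t < 0 then t else 0) v = spec_form (\<lambda>t. - \<mu> * ?neg t) v"
    using neg_eq by (intro spec_form_cong) auto
  hence "spec_form (\<lambda>t. t) v = spec_form (\<lambda>t. if 0 < t then t else 0) v - \<mu> * q"
    using spec_form_pos_part_add_neg_part[of v] unfolding spec_form_scale q_def by simp
  also have "\<dots> < 0"
  proof (cases "spec_form ?pos v = 0")
    case True
    hence "q \<noteq> 0" using pos_q by simp
    then obtain i where "i < n*m" "lam i < 0"
      using spec_form_neq_0_imp_ex[of ?neg v] unfolding q_def by (auto split: if_splits)
    hence "0 < \<mu>" using neg_eq by force
    have "spec_form (\<lambda>t. if 0 < t then t else 0) v \<le> spec_form (\<lambda>t. T * ?pos t) v"
      using pos_le by (rule spec_form_mono)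
    also have "\<dots> = 0" using True by (simp add: spec_form_scale)
    finally show ?thesis using \<open>0 < \<mu>\<close> True pos_q by simp
  next
    case False
    then obtain i where i: "i < n*m" "0 < lam i" "0 < weight v i"
      using spec_form_neq_0_imp_ex[of ?pos v] by (auto split: if_splits)
    have "spec_form (\<lambda>t. if 0 < t then t else 0) v < spec_form (\<lambda>t. T * ?pos t) v"
      by (rule spec_form_less[OF _ i(1) _ i(3)]) (use pos_le small i(1,2) in \<open>auto simp: T_def\<close>)
    also have "\<dots> = T * (1 - q)" by (simp add: spec_form_scale pos_q)
    also have "\<dots> \<le> \<mu> * q"
    proof -
      have "\<mu> * p * (1 - q) \<le> \<mu> * q * (1 - p)"
        using \<open>0 \<le> \<mu>\<close> p_le by (simp add: q_def algebra_simps mult_left_mono)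
      thus ?thesis using \<open>p < 1\<close> by (simp add: T_def field_simps)
    qed
    finally show ?thesis by simp
  qed
  finally show ?thesis .
qed

lemma not_k_block_positive_if_pos_eigenvalues_small:
  assumes p_less: "sk_norm n m k (neg_proj (n*m) U lam) < 1"
    and neg_equal: "\<forall>i < n*m. \<forall>j < n*m. lam i < 0 \<longrightarrow> lam j < 0 \<longrightarrow> lam i = lam j"
    and det: "det (spec_fun (n*m) U lam (\<lambda>t. t)) \<noteq> 0"
    and small: "\<forall>i < n*m. lam i > 0 \<longrightarrow>
      lam i < sk_norm n m k (neg_part (n*m) U lam) / (1 - sk_norm n m k (neg_proj (n*m) U lam))"
  shows "\<not> k_block_positive n m k (spec_fun (n*m) U lam (\<lambda>t. t))"
proof
  assume kbp: "k_block_positive n m k (spec_fun (n*m) U lam (\<lambda>t. t))"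
  let ?neg = "\<lambda>t::real. if t < 0 then 1 else 0"
  define p where "p = sk_norm n m k (neg_proj (n*m) U lam)"
  obtain \<mu> where "0 \<le> \<mu>" and \<mu>: "\<And>i. i < n*m \<Longrightarrow> lam i < 0 \<Longrightarrow> lam i = - \<mu>"
  proof (cases "\<exists>i<n*m. lam i < 0")
    case True
    then obtain i where "i < n*m" "lam i < 0" by blast
    with neg_equal that[of "- lam i"] show ?thesis by auto
  qed (use that[of 0] in auto)
  have "sk_norm n m k (neg_part (n*m) U lam) \<le> \<bar>- \<mu>\<bar> * p"
    unfolding neg_part_def p_def neg_proj_def using \<mu>
    by (intro sk_norm_spec_fun_scale_le) auto
  hence "sk_norm n m k (neg_part (n*m) U lam) / (1 - p) \<le> \<mu> * p / (1 - p)"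
    using p_less \<open>0 \<le> \<mu>\<close> by (simp add: p_def divide_right_mono)
  hence small': "lam i < \<mu> * p / (1 - p)" if "i < n*m" "0 < lam i" for i
    using small that by (fastforce simp: p_def)
  have nonzero: "lam i \<noteq> 0" if "i < n*m" for i
    using det that by (auto simp: det_spec_fun)
  obtain v where v: "unit_vec_c (n*m) v" "schmidt_rank n m v \<le> k" and "p \<le> spec_form ?neg v"
    unfolding p_def neg_proj_def by (rule sk_norm_spec_fun_attained[of ?neg]) simp_all
  with spec_form_neg_if_pos_eigenvalues_small[OF \<open>0 \<le> \<mu>\<close> \<mu> nonzero v(1) _ _ small'] p_less
  have "spec_form (\<lambda>t. t) v < 0" by (simp add: p_def)
  with kbp v show False by (auto simp: k_block_positive_spec_fun_iff unit_vec_c_def)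
qed

end

theorem theorem5p1:
  fixes n m k :: nat and X U :: "complex mat" and lam :: "nat \<Rightarrow> real"
  assumes "m \<le> n" and "1 \<le> k" and "k \<le> m"
    and "X \<in> carrier_mat (n*m) (n*m)" and "hermitian_mat X"
    and "eigenbasis (n*m) X U lam"
  shows
    "(sk_norm n m k (neg_proj (n*m) U lam) = 1 \<longrightarrow> \<not> k_block_positive n m k X)
     \<and>
     ((sk_norm n m k (null_proj (n*m) U lam + neg_proj (n*m) U lam) < 1 \<and>
       (\<forall>i < n*m. lam i > 0 \<longrightarrow>
          lam i \<ge> sk_norm n m k (neg_part (n*m) U lam) /
                  (1 - sk_norm n m k (null_proj (n*m) U lam + neg_proj (n*m) U lam))))
      \<longrightarrow> k_block_positive n m k X)
     \<and>
     ((sk_norm n m k (neg_proj (n*m) U lam) < 1 \<and>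
       (\<forall>i < n*m. \<forall>j < n*m. lam i < 0 \<longrightarrow> lam j < 0 \<longrightarrow> lam i = lam j) \<and>
       det X \<noteq> 0 \<and>
       (\<forall>i < n*m. lam i > 0 \<longrightarrow>
          lam i < sk_norm n m k (neg_part (n*m) U lam) / (1 - sk_norm n m k (neg_proj (n*m) U lam))))
      \<longrightarrow> \<not> k_block_positive n m k X)"
proof -
  have U: "U \<in> carrier_mat (n*m) (n*m)" "mat_adjoint U * U = 1\<^sub>m (n*m)"
    and X: "X = spec_fun (n*m) U lam (\<lambda>t. t)"
    using assms(6) by (auto simp: eigenbasis_def spec_fun_def)
  have "0 < n" "0 < m" using assms(1-3) by auto
  then interpret bipartite_eigenbasis n m k U lam
    using assms(2) U by unfold_locales
  show ?thesis
    using not_k_block_positive_if_sk_norm_neg_proj_eq_1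
      k_block_positive_if_pos_eigenvalues_large[OF assms(5)[unfolded X]]
      not_k_block_positive_if_pos_eigenvalues_small
    unfolding X by blast
qed

end
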